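(* Let $n>1$ be an integer with square-free part $m=\prod_{p\mid n,\ p\text{ prime}}p$. Then $$n\sum_{d_1\mid n}\sum_{d_2\mid n}\mu(d_1)\mu(d_2)\,s\!\left(\frac{n}{d_1},\frac{n}{d_2}\right)=\frac{\phi(n)}{24}\left(2(-1)^{\omega(m)}\phi(m)+2^{\omega(n)}\right).$$
   Context: $\mu$ is the Möbius function, $\phi$ Euler's totient function, $\omega(k)$ the number of distinct prime factors of $k$. For positive integers $b,a$ (no coprimality assumed), $s(b,a)=\sum_{k=1}^{a}\left(\left(\frac{kb}{a}\right)\right)\left(\left(\frac{k}{a}\right)\right)$, where $((x))=\{x\}-\tfrac12$ if $x\notin\mathbb{Z}$ and $((x))=0$ if $x\in\mathbb{Z}$, with $\{x\}$ the fractional part. *)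

theory Defs
  imports "HOL-Number_Theory.Number_Theory" "HOL-Computational_Algebra.Squarefree"
begin

definition mobius_mu :: "nat \<Rightarrow> int" where
  "mobius_mu n = (if n = 0 \<or> \<not> squarefree n then 0 else (-1) ^ card (prime_factors n))"

definition omega :: "nat \<Rightarrow> nat" where
  "omega n = card (prime_factors n)"

definition sawtooth :: "real \<Rightarrow> real" where
  "sawtooth x = (if x \<in> \<int> then 0 else frac x - 1/2)"

text \<open>Dedekind sum s(b,a) for positive integers b, a (no coprimality assumed).\<close>
definition dedekind_sum :: "nat \<Rightarrow> nat \<Rightarrow> real" where
  "dedekind_sum b a = (\<Sum>k=1..a. sawtooth (real (k * b) / real a) * sawtooth (real k / real a))"

end

(*
  Only squarefree divisors contribute, so d1 and d2 range over the products of sets P and Q of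
  prime factors of n.  With t = n / prod (P \<union> Q), a = prod (P - Q) and b = prod (Q - P) one
  has n/d1 = t b and n/d2 = t a with a, b coprime.  Dedekind sums are invariant under common
  scaling, so after symmetrising the double sum in (d1, d2) the reciprocity law
  s(b,a) + s(a,b) = (a^2 + b^2 + 1) / (12 a b) - 1/4 turns it into a signed sum over pairs (P, Q)
  of a/b, b/a, 1/(ab) and 1.  Each of these factors as a product over the primes of n, giving
  (-1)^omega(m) phi(m) phi(n)/n and 2^omega(n) phi(n)/n.

  Reciprocity is proved by counting lattice points: a s(b,a) is expressed through the floor sum
  sum_k k floor(kb/a), and the floor sums belonging to (a,b) and (b,a) are related by counting
  the lattice points below the diagonal of the a x b rectangle.
*)

theory Submission
  imports Defs
begin

section \<open>Sawtooth function and Dedekind sums\<close>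

lemma sawtooth_of_nat_div:
  assumes "a > 0"
  shows "sawtooth (real p / real a) = (if a dvd p then 0 else real (p mod a) / real a - 1/2)"
proof -
  have split: "real p / real a = real (p div a) + real (p mod a) / real a"
    by (rule of_nat_of_nat_div_aux)
  show ?thesis
  proof (cases "a dvd p")
    case True
    then show ?thesis using split by (simp add: sawtooth_def)
  next
    case False
    then have "0 < p mod a" "p mod a < a"
      using assms by (auto simp: mod_greater_zero_iff_not_dvd)
    then have frac: "0 < real (p mod a) / real a" "real (p mod a) / real a < 1"
      by auto
    then have "frac (real p / real a) = real (p mod a) / real a"
      by (subst split, subst frac_add_int_left) (auto simp: frac_eq)
    moreover have "real p / real a \<notin> \<int>"
      using frac calculation by (metis frac_eq_0_iff less_irrefl)
    ultimately show ?thesis using False by (simp add: sawtooth_def)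
  qed
qed

lemma sawtooth_add_Ints:
  assumes "m \<in> \<int>"
  shows "sawtooth (m + x) = sawtooth x"
proof -
  have "m + x \<in> \<int> \<longleftrightarrow> x \<in> \<int>"
    using assms by (metis Ints_add Ints_diff add_diff_cancel_left')
  moreover have "frac (m + x) = frac x"
    using assms by (metis add.commute frac_add_int_right)
  ultimately show ?thesis by (simp add: sawtooth_def)
qed

lemma dedekind_sum_lessThan:
  assumes "a > 0"
  shows "dedekind_sum b a = (\<Sum>k<a. sawtooth (real (k * b) / real a) * sawtooth (real k / real a))"
proof -
  let ?f = "\<lambda>k. sawtooth (real (k * b) / real a) * sawtooth (real k / real a)"
  have f0: "?f 0 = 0" and fa: "?f a = 0"
    using assms by (simp_all add: sawtooth_def)
  have "sum ?f {1..a} = sum ?f {..a}"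
  proof (rule sum.mono_neutral_left)
    show "\<forall>i\<in>{..a} - {1..a}. ?f i = 0"
      using f0 by (auto simp: not_less_eq_eq)
  qed auto
  also have "\<dots> = sum ?f {..<a}"
    using fa by (simp add: lessThan_Suc_atMost[symmetric])
  finally have "sum ?f {1..a} = sum ?f {..<a}" .
  then show ?thesis by (simp add: dedekind_sum_def)
qed

lemma sum_of_nat_lessThan:
  "(\<Sum>k<n. of_nat k :: 'a :: field_char_0) = of_nat n * (of_nat n - 1) / 2"
  by (induction n) (auto simp: field_simps)

lemma sum_of_nat_squared_lessThan:
  "(\<Sum>k<n. of_nat k ^ 2 :: 'a :: field_char_0) = of_nat n * (of_nat n - 1) * (2 * of_nat n - 1) / 6"
  by (induction n) (auto simp: field_simps power2_eq_square)

lemma sum_lessThan_mult: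
  fixes g :: "nat \<Rightarrow> 'a :: comm_monoid_add"
  shows "(\<Sum>k<c * a. g k) = (\<Sum>t<c. \<Sum>r<a. g (t * a + r))"
proof -
  have "sum g {t * a..<t * a + a} = (\<Sum>r<a. g (t * a + r))" for t
    using sum.atLeastLessThan_shift_0[of g "t * a" "t * a + a"]
    by (simp add: atLeast0LessThan add.commute comp_def)
  then show ?thesis
    using sum.nat_group[of g a c] by simp
qed

lemma sum_sawtooth_residues:
  assumes "a > 0" "c > 0" "r < a"
  shows "(\<Sum>t<c. sawtooth (real (t * a + r) / real (c * a))) = sawtooth (real r / real a)"
proof -
  define g where "g t = real t / real c + real r / real (c * a) - 1/2" for t
  define h where "h = (if r = 0 then 1/2 else (0::real))"
  have summand: "sawtooth (real (t * a + r) / real (c * a)) = g t + (if t = 0 then h else 0)"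
    if "t < c" for t
  proof -
    have "Suc t * a \<le> c * a" using that by (intro mult_right_mono) simp_all
    then have less: "t * a + r < c * a" using assms(3) by simp
    then have "(t * a + r) mod (c * a) = t * a + r" by simp
    moreover have "c * a dvd t * a + r \<longleftrightarrow> t = 0 \<and> r = 0"
      using less by (auto dest: dvd_imp_le)
    ultimately show ?thesis
      using assms sawtooth_of_nat_div[of "c * a" "t * a + r"]
      by (simp add: g_def h_def field_simps)
  qed
  have "(\<Sum>t<c. g t) = (\<Sum>t<c. real t) / real c + real c * (real r / real (c * a)) - real c / 2"
    by (simp add: g_def sum.distrib sum_subtractf sum_divide_distrib[symmetric])
  also have "\<dots> = real r / real a - 1/2"
    using assms by (simp add: sum_of_nat_lessThan field_simps)
  finally have sum_g: "(\<Sum>t<c. g t) = real r / real a - 1/2" .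
  have "(\<Sum>t<c. sawtooth (real (t * a + r) / real (c * a)))
      = (\<Sum>t<c. g t + (if t = 0 then h else 0))"
    by (intro sum.cong refl) (simp only: summand lessThan_iff)
  also have "\<dots> = real r / real a - 1/2 + h"
    using assms(2) by (simp add: sum.distrib sum_g)
  also have "\<dots> = sawtooth (real r / real a)"
  proof (cases "r = 0")
    case False
    then have "\<not> a dvd r" using assms(3) by (auto dest: dvd_imp_le)
    then show ?thesis using False assms(1,3) by (simp add: h_def sawtooth_of_nat_div)
  qed (simp add: h_def sawtooth_def)
  finally show ?thesis .
qed

lemma dedekind_sum_mult_mult:
  assumes "a > 0" "c > 0"
  shows "dedekind_sum (c * b) (c * a) = dedekind_sum b a"
proof -
  have periodic: "sawtooth (real ((t * a + r) * (c * b)) / real (c * a))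
      = sawtooth (real (r * b) / real a)" for t r
  proof -
    have "real ((t * a + r) * (c * b)) / real (c * a) = real (t * b) + real (r * b) / real a"
      using assms by (simp add: field_simps)
    then show ?thesis by (simp add: sawtooth_add_Ints)
  qed
  have "dedekind_sum (c * b) (c * a)
      = (\<Sum>t<c. \<Sum>r<a. sawtooth (real (r * b) / real a) * sawtooth (real (t * a + r) / real (c * a)))"
    using assms by (simp only: dedekind_sum_lessThan mult_pos_pos sum_lessThan_mult periodic)
  also have "\<dots> = (\<Sum>r<a. sawtooth (real (r * b) / real a)
      * (\<Sum>t<c. sawtooth (real (t * a + r) / real (c * a))))"
    by (subst sum.swap) (simp add: sum_distrib_left)
  also have "\<dots> = (\<Sum>r<a. sawtooth (real (r * b) / real a) * sawtooth (real r / real a))"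
    using assms by (intro sum.cong refl) (simp only: sum_sawtooth_residues lessThan_iff)
  also have "\<dots> = dedekind_sum b a"
    using assms by (simp only: dedekind_sum_lessThan)
  finally show ?thesis .
qed

section \<open>The reciprocity law\<close>

lemma sum_mult_mod_reindex:
  fixes f :: "nat \<Rightarrow> 'a :: comm_monoid_add"
  assumes "a > 0" "coprime a b"
  shows "(\<Sum>k<a. f ((k * b) mod a)) = (\<Sum>k<a. f k)"
proof -
  let ?g = "\<lambda>k. (k * b) mod a"
  have inj: "inj_on ?g {..<a}"
  proof
    fix x y assume "x \<in> {..<a}" "y \<in> {..<a}" "?g x = ?g y"
    moreover from \<open>?g x = ?g y\<close> have "[x = y] (mod a)"
      using assms(2) by (simp add: cong_def[symmetric] cong_mult_rcancel_nat coprime_commute)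
    ultimately show "x = y" by (simp add: cong_less_modulus_unique_nat)
  qed
  have "?g ` {..<a} = {..<a}"
    using assms(1) by (intro endo_inj_surj[OF _ _ inj]) auto
  with inj have "bij_betw ?g {..<a} {..<a}" by (simp add: bij_betw_def)
  then show ?thesis by (rule sum.reindex_bij_betw)
qed

lemma of_nat_mod_eq_diff:
  "(of_nat (x mod a) :: 'a :: comm_ring_1) = of_nat x - of_nat a * of_nat (x div a)"
  by (metis add_diff_cancel_left' mult_div_mod_eq of_nat_add of_nat_mult)

lemma dedekind_sum_coprime_sum_mod:
  assumes "a > 0" "coprime a b"
  shows "real a ^ 2 * dedekind_sum b a
       = (\<Sum>k<a. real k * real ((k * b) mod a)) - real a ^ 2 * (real a - 1) / 4"
proof -
  define g where "g k = (real ((k * b) mod a) - real a / 2) * (real k - real a / 2)" for k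
  have summand: "real a ^ 2 * (sawtooth (real (k * b) / real a) * sawtooth (real k / real a))
      = g k - (if k = 0 then real a ^ 2 / 4 else 0)" if "k < a" for k
  proof -
    have "a dvd k * b \<longleftrightarrow> k = 0" and "a dvd k \<longleftrightarrow> k = 0"
      using that assms by (auto simp: coprime_dvd_mult_left_iff dest: dvd_imp_le)
    then have s1: "sawtooth (real (k * b) / real a)
          = (if k = 0 then 0 else real ((k * b) mod a) / real a - 1/2)"
        and s2: "sawtooth (real k / real a) = (if k = 0 then 0 else real k / real a - 1/2)"
      using that sawtooth_of_nat_div[OF assms(1), of "k * b"] sawtooth_of_nat_div[OF assms(1), of k]
      by (simp_all only: mod_less)
    show ?thesis
      unfolding s1 s2 using assms(1)
      by (cases "k = 0") (simp_all add: g_def field_simps power2_eq_square)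
  qed
  define S where "S = (\<Sum>k<a. real k * real ((k * b) mod a))"
  have "(\<Sum>k<a. g k) = (\<Sum>k<a. real k * real ((k * b) mod a) - real a / 2 * real ((k * b) mod a)
      - real a / 2 * real k + real a ^ 2 / 4)"
    by (intro sum.cong refl) (simp add: g_def field_simps power2_eq_square)
  also have "\<dots> = S - real a / 2 * (\<Sum>k<a. real ((k * b) mod a)) - real a / 2 * (\<Sum>k<a. real k)
      + real a * (real a ^ 2 / 4)"
    by (simp add: S_def sum.distrib sum_subtractf sum_distrib_left)
  also have "\<dots> = S - real a ^ 2 * (real a - 1) / 4 + real a ^ 2 / 4"
    unfolding sum_mult_mod_reindex[OF assms, of real] sum_of_nat_lessThan
    by (simp add: field_simps power2_eq_square)
  finally have sum_g: "(\<Sum>k<a. g k) = S - real a ^ 2 * (real a - 1) / 4 + real a ^ 2 / 4" .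
  have "real a ^ 2 * dedekind_sum b a
      = (\<Sum>k<a. real a ^ 2 * (sawtooth (real (k * b) / real a) * sawtooth (real k / real a)))"
    using assms(1) by (simp add: dedekind_sum_lessThan sum_distrib_left)
  also have "\<dots> = (\<Sum>k<a. g k - (if k = 0 then real a ^ 2 / 4 else 0))"
    by (intro sum.cong refl) (simp only: summand lessThan_iff)
  also have "\<dots> = (\<Sum>k<a. g k) - real a ^ 2 / 4"
    using assms(1) by (simp add: sum_subtractf)
  finally show ?thesis unfolding sum_g S_def by simp
qed

lemma dedekind_sum_coprime_sum_div:
  assumes "a > 0" "coprime a b"
  shows "real a * dedekind_sum b a = real b * (real a - 1) * (2 * real a - 1) / 6
           - (\<Sum>k<a. real k * real ((k * b) div a)) - real a * (real a - 1) / 4"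
proof -
  define A where "A = (\<Sum>k<a. real k * real ((k * b) div a))"
  define S where "S = (\<Sum>k<a. real k * real ((k * b) mod a))"
  define K where "K = (\<Sum>k<a. real k ^ 2)"
  have "S = (\<Sum>k<a. real b * real k ^ 2 - real a * (real k * real ((k * b) div a)))"
    unfolding S_def
    by (intro sum.cong refl) (simp add: of_nat_mod_eq_diff algebra_simps power2_eq_square)
  then have S_eq: "S = real b * K - real a * A"
    by (simp add: A_def K_def sum_subtractf sum_distrib_left)
  have "real a * (real a * dedekind_sum b a) = real a ^ 2 * dedekind_sum b a"
    by (simp add: power2_eq_square)
  also have "\<dots> = real b * K - real a * A - real a ^ 2 * (real a - 1) / 4"
    unfolding S_eq[symmetric] S_def by (rule dedekind_sum_coprime_sum_mod[OF assms])
  also have "\<dots> = real a * (real b * (real a - 1) * (2 * real a - 1) / 6 - A - real a * (real a - 1) / 4)"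
    unfolding K_def sum_of_nat_squared_lessThan by (simp add: field_simps power2_eq_square)
  finally have "real a * (real a * dedekind_sum b a)
      = real a * (real b * (real a - 1) * (2 * real a - 1) / 6 - A - real a * (real a - 1) / 4)" .
  then show ?thesis using assms(1) by (simp add: A_def)
qed

lemma sum_mult_div_coprime:
  assumes "b > 0" "coprime b a"
  shows "2 * (\<Sum>j<b. real ((j * a) div b)) = (real a - 1) * (real b - 1)"
proof -
  define P where "P = (\<Sum>j<b. real ((j * a) div b))"
  have "(\<Sum>j<b. real ((j * a) mod b)) = (\<Sum>j<b. real j)"
    using sum_mult_mod_reindex[OF assms] .
  then have "real b * P = (real a - 1) * (\<Sum>j<b. real j)"
    by (simp add: P_def of_nat_mod_eq_diff sum_subtractf sum_distrib_left algebra_simps)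
  then have "real b * (2 * P) = real b * ((real a - 1) * (real b - 1))"
    by (simp add: sum_of_nat_lessThan field_simps)
  then show ?thesis using assms(1) by (simp add: P_def)
qed

lemma sum_weighted_mult_div_coprime:
  assumes "b > 0" "coprime b a"
  shows "2 * real a * (\<Sum>j<b. real j * real ((j * a) div b))
       = (real a ^ 2 - 1) * (real b - 1) * (2 * real b - 1) / 6
         + real b * (\<Sum>j<b. real ((j * a) div b) ^ 2)"
proof -
  define B where "B = (\<Sum>j<b. real j * real ((j * a) div b))"
  define Q where "Q = (\<Sum>j<b. real ((j * a) div b) ^ 2)"
  define J where "J = (\<Sum>j<b. real j ^ 2)"
  have "J = (\<Sum>j<b. real ((j * a) mod b) ^ 2)"
    unfolding J_def using sum_mult_mod_reindex[OF assms, of "\<lambda>x. real x ^ 2"] by simp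
  also have "\<dots> = (\<Sum>j<b. real a ^ 2 * real j ^ 2 - 2 * real a * real b * (real j * real ((j * a) div b))
           + real b ^ 2 * real ((j * a) div b) ^ 2)"
    by (intro sum.cong refl) (simp add: of_nat_mod_eq_diff power2_eq_square algebra_simps)
  also have "\<dots> = real a ^ 2 * J - 2 * real a * real b * B + real b ^ 2 * Q"
    by (simp add: B_def Q_def J_def sum.distrib sum_subtractf sum_distrib_left)
  finally have "J = real a ^ 2 * J - 2 * real a * real b * B + real b ^ 2 * Q" .
  moreover have "J = real b * (real b - 1) * (2 * real b - 1) / 6"
    unfolding J_def by (rule sum_of_nat_squared_lessThan)
  ultimately have "real b * (2 * real a * B)
      = real b * ((real a ^ 2 - 1) * (real b - 1) * (2 * real b - 1) / 6 + real b * Q)"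
    by (simp add: field_simps power2_eq_square)
  then show ?thesis using assms(1) by (simp add: B_def Q_def)
qed

lemma card_multiples_le:
  assumes "a > 0" "k < a"
  shows "card {j \<in> {1..<b}. j * a \<le> k * b} = (k * b) div a"
proof -
  have bound: "j < b" if "j * a \<le> k * b" "j \<ge> 1" for j
  proof -
    have "k * b \<le> b * a" using assms(2) by (simp add: mult.commute)
    with that(1) have "j * a \<le> b * a" by (rule order_trans)
    then have "j \<le> b" using assms(1) by simp
    moreover have "j \<noteq> b" using that assms by auto
    ultimately show ?thesis by simp
  qed
  have "j \<in> {j \<in> {1..<b}. j * a \<le> k * b} \<longleftrightarrow> j \<in> {1..(k * b) div a}" for j
    using bound[of j] less_eq_div_iff_mult_less_eq[OF assms(1), of j "k * b"] by auto
  then have "{j \<in> {1..<b}. j * a \<le> k * b} = {1..(k * b) div a}"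
    by blast
  then show ?thesis by simp
qed

lemma sum_of_nat_greaterThan_lessThan:
  assumes "p < a"
  shows "(\<Sum>k<a. if p < k then of_nat k else 0 :: 'a :: field_char_0)
       = of_nat a * (of_nat a - 1) / 2 - of_nat p * (of_nat p + 1) / 2"
proof -
  have "(\<Sum>k<a. if p < k then of_nat k else 0 :: 'a) = (\<Sum>k\<in>{Suc p..<a}. of_nat k)"
    by (rule sum.mono_neutral_cong_right) auto
  also have "\<dots> = (\<Sum>k<a. of_nat k) - (\<Sum>k<Suc p. of_nat k)"
    using sum_diff_nat_ivl[of 0 "Suc p" a "of_nat :: nat \<Rightarrow> 'a"] assms
    by (simp add: atLeast0LessThan)
  finally show ?thesis unfolding sum_of_nat_lessThan by (simp add: field_simps)
qed

lemma sum_mult_div_reciprocity: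
  assumes "a > 0" "b > 0" "coprime a b"
  shows "2 * (\<Sum>k<a. real k * real ((k * b) div a))
         + (\<Sum>j<b. real ((j * a) div b) ^ 2) + (\<Sum>j<b. real ((j * a) div b))
         = (real b - 1) * real a * (real a - 1)"
proof -
  define q where "q j = (j * a) div b" for j
  define A where "A = (\<Sum>k<a. real k * real ((k * b) div a))"
  define P where "P = (\<Sum>j<b. real (q j))"
  define Q where "Q = (\<Sum>j<b. real (q j) ^ 2)"
  define X where "X = real a * (real a - 1) / 2"
  define T where "T j = X - (real (q j) ^ 2 + real (q j)) / 2" for j
  \<comment> \<open>Count the lattice points (j, k) with j a \<le> k b column by column;
     coprimality rules out j a = k b for 0 < j < b.\<close>
  have column: "(\<Sum>k<a. if j * a \<le> k * b then real k else 0) = T j" if j: "j \<in> {1..<b}" for j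
  proof -
    have "\<not> b dvd j"
      using j by (auto dest: dvd_imp_le)
    then have "j * a \<noteq> k * b" for k
      using assms(3) by (metis coprime_commute coprime_dvd_mult_left_iff dvd_triv_right)
    then have "j * a \<le> k * b \<longleftrightarrow> q j < k" for k
      using assms(2) by (simp add: q_def div_less_iff_less_mult le_less)
    moreover have "q j < a"
      using j assms(1,2) by (simp add: q_def div_less_iff_less_mult)
    ultimately show ?thesis
      by (simp add: T_def X_def sum_of_nat_greaterThan_lessThan field_simps power2_eq_square)
  qed
  have "A = (\<Sum>k<a. \<Sum>j\<in>{1..<b}. if j * a \<le> k * b then real k else 0)"
    unfolding A_def using assms(1)
    by (intro sum.cong refl)
       (simp add: card_multiples_le[symmetric] sum.If_cases Int_def sum_distrib_left)
  also have "\<dots> = (\<Sum>j\<in>{1..<b}. T j)"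
    by (subst sum.swap) (simp add: column)
  also have "\<dots> = (\<Sum>j<b. T j) - T 0"
  proof -
    have "{..<b} = insert 0 {1..<b}" using assms(2) by auto
    then show ?thesis by simp
  qed
  also have "\<dots> = real b * X - (Q + P) / 2 - X"
    unfolding T_def P_def Q_def
    by (simp add: q_def sum_subtractf sum.distrib sum_divide_distrib[symmetric])
  finally have "A = real b * X - (Q + P) / 2 - X" .
  then show ?thesis
    unfolding A_def[symmetric] by (simp add: P_def Q_def q_def X_def field_simps)
qed

theorem dedekind_sum_reciprocity:
  assumes "a > 0" "b > 0" "coprime a b"
  shows "dedekind_sum b a + dedekind_sum a b
       = (real a ^ 2 + real b ^ 2 + 1) / (12 * real a * real b) - 1/4"
proof -
  have coprime_ba: "coprime b a" using assms(3) by (simp add: coprime_commute)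
  define A where "A = (\<Sum>k<a. real k * real ((k * b) div a))"
  define B where "B = (\<Sum>j<b. real j * real ((j * a) div b))"
  define P where "P = (\<Sum>j<b. real ((j * a) div b))"
  define Q where "Q = (\<Sum>j<b. real ((j * a) div b) ^ 2)"
  have s1: "real a * dedekind_sum b a
      = real b * (real a - 1) * (2 * real a - 1) / 6 - A - real a * (real a - 1) / 4"
    unfolding A_def by (rule dedekind_sum_coprime_sum_div[OF assms(1,3)])
  have s2: "real b * dedekind_sum a b
      = real a * (real b - 1) * (2 * real b - 1) / 6 - B - real b * (real b - 1) / 4"
    unfolding B_def by (rule dedekind_sum_coprime_sum_div[OF assms(2) coprime_ba])
  have B_eq: "2 * real a * B = (real a ^ 2 - 1) * (real b - 1) * (2 * real b - 1) / 6 + real b * Q"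
    unfolding B_def Q_def by (rule sum_weighted_mult_div_coprime[OF assms(2) coprime_ba])
  have P_eq: "P = (real a - 1) * (real b - 1) / 2"
    using sum_mult_div_coprime[OF assms(2) coprime_ba] unfolding P_def by simp
  have "2 * A + Q + P = (real b - 1) * real a * (real a - 1)"
    unfolding A_def Q_def P_def by (rule sum_mult_div_reciprocity[OF assms])
  then have A_eq: "2 * A = (real b - 1) * real a * (real a - 1) - Q - P"
    by simp
  have "12 * real a * real b * (dedekind_sum b a + dedekind_sum a b)
      = 12 * real b * (real a * dedekind_sum b a) + 6 * (2 * real a * (real b * dedekind_sum a b))"
    by (simp add: algebra_simps)
  also have "\<dots> = 2 * real b ^ 2 * (real a - 1) * (2 * real a - 1) - 3 * real a * real b * (real a - 1)
      - 6 * real b * (2 * A) + 2 * real a ^ 2 * (real b - 1) * (2 * real b - 1)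
      - 3 * real a * real b * (real b - 1) - 6 * (2 * real a * B)"
    unfolding s1 s2 by (simp add: field_simps power2_eq_square)
  also have "\<dots> = real a ^ 2 + real b ^ 2 + 1 - 3 * real a * real b"
    \<comment> \<open>the unknown square sum Q cancels\<close>
    unfolding A_eq B_eq P_eq by (simp add: field_simps power2_eq_square)
  finally show ?thesis
    using assms(1,2) by (simp add: field_simps)
qed

section \<open>Squarefree divisors and the Moebius function\<close>

lemma prime_factors_prod_primes:
  fixes P :: "nat set"
  assumes "finite P" "\<And>p. p \<in> P \<Longrightarrow> prime p"
  shows "prime_factors (\<Prod>P) = P"
proof -
  have "0 \<notin> P" using assms(2) by fastforce
  then show ?thesis
    using assms prime_factors_prod[of P "\<lambda>p. p"] by (simp add: prime_prime_factors)
qed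

lemma mobius_mu_prod_primes:
  fixes P :: "nat set"
  assumes "finite P" "\<And>p. p \<in> P \<Longrightarrow> prime p"
  shows "mobius_mu (\<Prod>P) = (-1) ^ card P"
proof -
  have "\<Prod>P > 0" using assms(2) by (intro prod_pos) (auto dest: prime_gt_0_nat)
  moreover have "squarefree (\<Prod>P)"
    using assms(2) by (intro squarefree_prod_coprime) (auto intro: primes_coprime squarefree_prime)
  ultimately show ?thesis
    using prime_factors_prod_primes[OF assms] by (simp add: mobius_mu_def)
qed

lemma prod_prime_factors_squarefree:
  fixes d :: nat
  assumes "squarefree d"
  shows "\<Prod>(prime_factors d) = d"
proof -
  have "d \<noteq> 0" using assms by (metis not_squarefree_0)
  then have "d = (\<Prod>p\<in>prime_factors d. p ^ multiplicity p d)"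
    by (simp add: prod_prime_factors)
  also have "\<dots> = \<Prod>(prime_factors d)"
    using assms \<open>d \<noteq> 0\<close> squarefree_factorial_semiring'[of d] by (intro prod.cong refl) simp
  finally show ?thesis ..
qed

lemma prod_dvd_of_subset_prime_factors:
  fixes n :: nat
  assumes "n > 0" "P \<subseteq> prime_factors n"
  shows "\<Prod>P dvd n"
proof -
  have "\<Prod>P dvd \<Prod>(prime_factors n)"
    using assms(2) by (intro prod_dvd_prod_subset) auto
  also have "\<dots> dvd (\<Prod>p\<in>prime_factors n. p ^ multiplicity p n)"
    by (intro prod_dvd_prod) (auto simp: prime_factors_multiplicity intro: dvd_power)
  also have "\<dots> = n"
    using assms(1) by (simp add: prod_prime_factors)
  finally show ?thesis .
qed

lemma sum_divisors_mobius:
  fixes n :: nat and G :: "nat \<Rightarrow> 'a :: comm_ring_1"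
  assumes "n > 0"
  shows "(\<Sum>d | d dvd n. of_int (mobius_mu d) * G d)
       = (\<Sum>P\<in>Pow (prime_factors n). (-1) ^ card P * G (\<Prod>P))"
proof -
  let ?S = "prime_factors n"
  have primes: "finite P" "\<And>p. p \<in> P \<Longrightarrow> prime p" if "P \<in> Pow ?S" for P
    using that by (auto intro: finite_subset)
  have inj: "inj_on Prod (Pow ?S)"
    by (rule inj_on_inverseI[of _ prime_factors]) (simp add: prime_factors_prod_primes primes)
  have mu_zero: "mobius_mu d = 0" if "d dvd n" "d \<notin> Prod ` Pow ?S" for d
  proof (rule ccontr)
    assume "mobius_mu d \<noteq> 0"
    then have "squarefree d" "d > 0" by (auto simp: mobius_mu_def split: if_splits)
    moreover have "prime_factors d \<subseteq> ?S"
      using that(1) assms by (intro dvd_prime_factors) auto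
    ultimately show False
      using that(2) prod_prime_factors_squarefree by (metis PowI image_eqI)
  qed
  have "(\<Sum>d | d dvd n. of_int (mobius_mu d) * G d) = (\<Sum>d\<in>Prod ` Pow ?S. of_int (mobius_mu d) * G d)"
    using assms mu_zero prod_dvd_of_subset_prime_factors[OF assms]
    by (intro sum.mono_neutral_right) auto
  also have "\<dots> = (\<Sum>P\<in>Pow ?S. (-1) ^ card P * G (\<Prod>P))"
    by (simp add: sum.reindex[OF inj] mobius_mu_prod_primes primes)
  finally show ?thesis .
qed

section \<open>Signed sums over pairs of sets of primes\<close>

lemma sum_Pow_prod_bool:
  fixes f :: "'a \<Rightarrow> bool \<Rightarrow> 'b :: comm_semiring_1"
  assumes "finite S"
  shows "(\<Sum>P\<in>Pow S. \<Prod>p\<in>S. f p (p \<in> P)) = (\<Prod>p\<in>S. f p True + f p False)"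
proof -
  have "(\<Prod>p\<in>S. f p (p \<in> P)) = (\<Prod>p\<in>P. f p True) * (\<Prod>p\<in>S - P. f p False)"
    if "P \<in> Pow S" for P
  proof -
    have "(\<Prod>p\<in>S. f p (p \<in> P)) = (\<Prod>p\<in>S. if p \<in> P then f p True else f p False)"
      by (intro prod.cong refl) auto
    also have "\<dots> = (\<Prod>p\<in>S \<inter> P. f p True) * (\<Prod>p\<in>S - P. f p False)"
      using assms by (simp add: prod.If_cases Diff_eq)
    finally show ?thesis using that by (simp add: Int_absorb1)
  qed
  then show ?thesis
    using prod_add[OF assms, of "\<lambda>p. f p True" "\<lambda>p. f p False"] by simp
qed

lemma sum_Pow_Pow_signed_prod:
  fixes f g :: "'a \<Rightarrow> 'b :: comm_ring_1"
  assumes "finite S"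
  shows "(\<Sum>P\<in>Pow S. \<Sum>Q\<in>Pow S. (-1) ^ card P * (-1) ^ card Q * (prod f (P - Q) * prod g (Q - P)))
       = (\<Prod>p\<in>S. 2 - f p - g p)"
proof -
  \<comment> \<open>the summand factors into local weights depending only on whether p \<in> P and p \<in> Q\<close>
  define w where "w p x y = (if x then -1 else 1) * (if y then -1 else 1)
      * (if x \<and> \<not> y then f p else 1) * (if y \<and> \<not> x then g p else 1)" for p x y
  have restrict: "prod h A = (\<Prod>p\<in>S. if p \<in> A then h p else 1)"
    if "A \<subseteq> S" for h :: "'a \<Rightarrow> 'b" and A
    using prod.inter_restrict[OF assms, of h A] that by (simp add: Int_absorb1)
  have as_prod: "(-1) ^ card P * (-1) ^ card Q * (prod f (P - Q) * prod g (Q - P))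
      = (\<Prod>p\<in>S. w p (p \<in> P) (p \<in> Q))" if "P \<in> Pow S" "Q \<in> Pow S" for P Q
    using that
    by (simp add: restrict[of P "\<lambda>_. -1"] restrict[of Q "\<lambda>_. -1"] restrict[of "P - Q" f]
        restrict[of "Q - P" g] w_def prod.distrib[symmetric] Diff_subset[THEN subset_trans]
        mult.assoc flip: prod_constant)
  have "(\<Sum>P\<in>Pow S. \<Sum>Q\<in>Pow S. (-1) ^ card P * (-1) ^ card Q * (prod f (P - Q) * prod g (Q - P)))
      = (\<Sum>P\<in>Pow S. \<Sum>Q\<in>Pow S. \<Prod>p\<in>S. w p (p \<in> P) (p \<in> Q))"
    by (intro sum.cong refl as_prod)
  also have "\<dots> = (\<Sum>P\<in>Pow S. \<Prod>p\<in>S. w p (p \<in> P) True + w p (p \<in> P) False)"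
  proof (rule sum.cong[OF refl])
    fix P
    show "(\<Sum>Q\<in>Pow S. \<Prod>p\<in>S. w p (p \<in> P) (p \<in> Q))
        = (\<Prod>p\<in>S. w p (p \<in> P) True + w p (p \<in> P) False)"
      using sum_Pow_prod_bool[OF assms, of "\<lambda>p y. w p (p \<in> P) y"] by simp
  qed
  also have "\<dots> = (\<Prod>p\<in>S. (w p True True + w p True False) + (w p False True + w p False False))"
    using sum_Pow_prod_bool[OF assms, of "\<lambda>p x. w p x True + w p x False"] by simp
  also have "\<dots> = (\<Prod>p\<in>S. 2 - f p - g p)"
    by (simp add: w_def algebra_simps)
  finally show ?thesis .
qed

lemma sum_Pow_Pow_signed_reciprocity:
  fixes x :: "'a \<Rightarrow> real"
  assumes "finite S" "S \<noteq> {}" "\<And>p. p \<in> S \<Longrightarrow> x p \<noteq> 0"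
  shows "(\<Sum>P\<in>Pow S. \<Sum>Q\<in>Pow S. (-1) ^ card P * (-1) ^ card Q *
           ((prod x (P - Q) ^ 2 + prod x (Q - P) ^ 2 + 1) / (12 * prod x (P - Q) * prod x (Q - P)) - 1/4))
       = (\<Prod>p\<in>S. 1 - 1 / x p) * (2 * (-1) ^ card S * (\<Prod>p\<in>S. x p - 1) + 2 ^ card S) / 12"
proof -
  \<comment> \<open>a/b, b/a, 1/(ab) and 1 all have the shape prod f (P - Q) * prod g (Q - P)\<close>
  define y where "y p = 1 / x p" for p
  define T where "T f g = (\<Sum>P\<in>Pow S. \<Sum>Q\<in>Pow S.
      (-1) ^ card P * (-1) ^ card Q * (prod f (P - Q) * prod g (Q - P)))" for f g :: "'a \<Rightarrow> real"
  have T_eq: "T f g = (\<Prod>p\<in>S. 2 - f p - g p)" for f g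
    unfolding T_def by (rule sum_Pow_Pow_signed_prod[OF assms(1)])
  have summand: "(-1) ^ card P * (-1) ^ card Q *
        ((prod x (P - Q) ^ 2 + prod x (Q - P) ^ 2 + 1) / (12 * prod x (P - Q) * prod x (Q - P)) - 1/4)
      = ((-1) ^ card P * (-1) ^ card Q * (prod x (P - Q) * prod y (Q - P))
         + (-1) ^ card P * (-1) ^ card Q * (prod y (P - Q) * prod x (Q - P))
         + (-1) ^ card P * (-1) ^ card Q * (prod y (P - Q) * prod y (Q - P))
         - 3 * ((-1) ^ card P * (-1) ^ card Q * (prod (\<lambda>_. 1) (P - Q) * prod (\<lambda>_. 1) (Q - P)))) / 12"
    if "P \<in> Pow S" "Q \<in> Pow S" for P Q
  proof -
    have "prod x (P - Q) \<noteq> 0" "prod x (Q - P) \<noteq> 0"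
      using that assms by (auto simp: prod_zero_iff finite_subset)
    moreover have inverse: "prod y (P - Q) = 1 / prod x (P - Q)" "prod y (Q - P) = 1 / prod x (Q - P)"
      by (simp_all add: y_def prod_dividef)
    ultimately show ?thesis
      unfolding inverse by (simp add: field_simps power2_eq_square)
  qed
  have "(\<Sum>P\<in>Pow S. \<Sum>Q\<in>Pow S. (-1) ^ card P * (-1) ^ card Q *
           ((prod x (P - Q) ^ 2 + prod x (Q - P) ^ 2 + 1) / (12 * prod x (P - Q) * prod x (Q - P)) - 1/4))
      = (T x y + T y x + T y y - 3 * T (\<lambda>_. 1) (\<lambda>_. 1)) / 12"
    unfolding T_def sum_divide_distrib sum_distrib_left sum.distrib[symmetric] sum_subtractf[symmetric]
    by (intro sum.cong refl summand)
  also have "\<dots> = (2 * (\<Prod>p\<in>S. 2 - x p - y p) + (\<Prod>p\<in>S. 2 - 2 * y p)) / 12"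
    using assms(1,2) by (simp add: T_eq card_gt_0_iff algebra_simps)
  also have "(\<Prod>p\<in>S. 2 - x p - y p)
      = (\<Prod>p\<in>S. 1 - 1 / x p) * ((-1) ^ card S * (\<Prod>p\<in>S. x p - 1))"
  proof -
    have "(\<Prod>p\<in>S. 2 - x p - y p) = (\<Prod>p\<in>S. (1 - 1 / x p) * (-1 * (x p - 1)))"
      using assms(3) by (intro prod.cong refl) (simp add: y_def field_simps)
    then show ?thesis by (simp only: prod.distrib prod_constant)
  qed
  also have "(\<Prod>p\<in>S. 2 - 2 * y p) = 2 ^ card S * (\<Prod>p\<in>S. 1 - 1 / x p)"
    by (simp add: y_def prod.distrib[symmetric] algebra_simps flip: prod_constant)
  finally show ?thesis by (simp add: algebra_simps)
qed

section \<open>The Moebius-weighted double sum\<close>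

lemma dedekind_sum_squarefree_divisors:
  fixes n :: nat
  assumes "n > 0" "P \<subseteq> prime_factors n" "Q \<subseteq> prime_factors n"
  shows "dedekind_sum (n div \<Prod>P) (n div \<Prod>Q) + dedekind_sum (n div \<Prod>Q) (n div \<Prod>P)
       = ((\<Prod>p\<in>P - Q. real p) ^ 2 + (\<Prod>p\<in>Q - P. real p) ^ 2 + 1)
           / (12 * (\<Prod>p\<in>P - Q. real p) * (\<Prod>p\<in>Q - P. real p)) - 1/4"
proof -
  have fin: "finite P" "finite Q"
    using assms(2,3) finite_subset by auto
  have prime: "prime p" if "p \<in> P \<union> Q" for p
    using that assms(2,3) by auto
  have pos: "\<Prod>A > 0" if "A \<subseteq> P \<union> Q" for A
    using that prime by (intro prod_pos) (auto dest: prime_gt_0_nat)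
  have pos_diff: "\<Prod>(P - Q) > 0" "\<Prod>(Q - P) > 0"
    by (auto intro: pos)
  have "\<Prod>(P \<union> Q) dvd n"
    using assms by (intro prod_dvd_of_subset_prime_factors) auto
  then obtain t where t: "n = \<Prod>(P \<union> Q) * t" ..
  have "t > 0" using t assms(1) by (simp add: gr0I)
  have "(P \<union> Q) - P = Q - P" "(P \<union> Q) - Q = P - Q" by auto
  then have n_P: "n = t * \<Prod>(Q - P) * \<Prod>P" and n_Q: "n = t * \<Prod>(P - Q) * \<Prod>Q"
    using t fin prod.subset_diff[of P "P \<union> Q" "\<lambda>p. p"]
      prod.subset_diff[of Q "P \<union> Q" "\<lambda>p. p"]
    by (simp_all add: ac_simps)
  have "n div \<Prod>P = t * \<Prod>(Q - P)"
    using pos[of P] by (subst n_P) simp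
  moreover have "n div \<Prod>Q = t * \<Prod>(P - Q)"
    using pos[of Q] by (subst n_Q) simp
  ultimately have "dedekind_sum (n div \<Prod>P) (n div \<Prod>Q) + dedekind_sum (n div \<Prod>Q) (n div \<Prod>P)
      = dedekind_sum (\<Prod>(Q - P)) (\<Prod>(P - Q)) + dedekind_sum (\<Prod>(P - Q)) (\<Prod>(Q - P))"
    using \<open>t > 0\<close> pos_diff by (simp add: dedekind_sum_mult_mult)
  also have "\<dots> = (real (\<Prod>(P - Q)) ^ 2 + real (\<Prod>(Q - P)) ^ 2 + 1)
      / (12 * real (\<Prod>(P - Q)) * real (\<Prod>(Q - P))) - 1/4"
    using prime pos_diff
    by (intro dedekind_sum_reciprocity prod_coprime_left prod_coprime_right primes_coprime) auto
  finally show ?thesis by simp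
qed

lemma totient_prod_primes:
  fixes P :: "nat set"
  assumes "finite P" "\<And>p. p \<in> P \<Longrightarrow> prime p"
  shows "real (totient (\<Prod>P)) = (\<Prod>p\<in>P. real p - 1)"
proof -
  have "real (totient (\<Prod>P)) = (\<Prod>p\<in>P. real p) * (\<Prod>p\<in>P. 1 - 1 / real p)"
    using totient_formula2[of "\<Prod>P"] by (simp add: prime_factors_prod_primes[OF assms])
  also have "\<dots> = (\<Prod>p\<in>P. real p * (1 - 1 / real p))"
    by (simp add: prod.distrib)
  also have "\<dots> = (\<Prod>p\<in>P. real p - 1)"
    using assms(2) by (intro prod.cong refl) (auto simp: right_diff_distrib dest: prime_gt_0_nat)
  finally show ?thesis .
qed

lemma sum_divisors_mobius_dedekind_sum:
  fixes n :: nat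
  assumes "n > 1"
  defines "S \<equiv> prime_factors n"
  shows "2 * (\<Sum>d1 | d1 dvd n. \<Sum>d2 | d2 dvd n.
            real_of_int (mobius_mu d1 * mobius_mu d2) * dedekind_sum (n div d1) (n div d2))
       = (\<Prod>p\<in>S. 1 - 1 / real p) * (2 * (-1) ^ card S * (\<Prod>p\<in>S. real p - 1) + 2 ^ card S) / 12"
proof -
  have "n > 0" using assms(1) by simp
  have "S \<noteq> {}"
    using assms(1) by (auto simp: S_def prime_factorization_empty_iff)
  define D where "D P Q = dedekind_sum (n div \<Prod>P) (n div \<Prod>Q)" for P Q
  define \<sigma> :: "nat set \<Rightarrow> nat set \<Rightarrow> real"
    where "\<sigma> P Q = (-1) ^ card P * (-1) ^ card Q" for P Q
  have "(\<Sum>d1 | d1 dvd n. \<Sum>d2 | d2 dvd n.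
            real_of_int (mobius_mu d1 * mobius_mu d2) * dedekind_sum (n div d1) (n div d2))
      = (\<Sum>d1 | d1 dvd n. of_int (mobius_mu d1) * (\<Sum>d2 | d2 dvd n.
            of_int (mobius_mu d2) * dedekind_sum (n div d1) (n div d2)))"
    by (simp add: sum_distrib_left mult.assoc)
  also have "\<dots> = (\<Sum>P\<in>Pow S. (-1) ^ card P * (\<Sum>Q\<in>Pow S. (-1) ^ card Q * D P Q))"
    unfolding S_def D_def using \<open>n > 0\<close> by (simp add: sum_divisors_mobius)
  also have "\<dots> = (\<Sum>P\<in>Pow S. \<Sum>Q\<in>Pow S. \<sigma> P Q * D P Q)"
    by (simp add: \<sigma>_def sum_distrib_left mult.assoc)
  also have "\<dots> = ((\<Sum>P\<in>Pow S. \<Sum>Q\<in>Pow S. \<sigma> P Q * D P Q)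
      + (\<Sum>P\<in>Pow S. \<Sum>Q\<in>Pow S. \<sigma> P Q * D Q P)) / 2"
    by (subst (2) sum.swap) (simp add: \<sigma>_def mult.commute)
  also have "\<dots> = (\<Sum>P\<in>Pow S. \<Sum>Q\<in>Pow S. \<sigma> P Q * (D P Q + D Q P)) / 2"
    by (simp add: sum.distrib distrib_left)
  also have "\<dots> = (\<Sum>P\<in>Pow S. \<Sum>Q\<in>Pow S. (-1) ^ card P * (-1) ^ card Q *
      (((\<Prod>p\<in>P - Q. real p) ^ 2 + (\<Prod>p\<in>Q - P. real p) ^ 2 + 1)
        / (12 * (\<Prod>p\<in>P - Q. real p) * (\<Prod>p\<in>Q - P. real p)) - 1/4)) / 2"
    unfolding D_def \<sigma>_def S_def using \<open>n > 0\<close>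
    by (intro arg_cong[where f = "\<lambda>x. x / 2"] sum.cong refl arg_cong2[where f = "(*)"]
        dedekind_sum_squarefree_divisors) auto
  also have "\<dots> = (\<Prod>p\<in>S. 1 - 1 / real p)
      * (2 * (-1) ^ card S * (\<Prod>p\<in>S. real p - 1) + 2 ^ card S) / 24"
    using \<open>S \<noteq> {}\<close>
    by (subst sum_Pow_Pow_signed_reciprocity)
       (auto simp: S_def intro: prime_gt_0_nat dest: in_prime_factors_imp_prime)
  finally show ?thesis by simp
qed

theorem mainTheorem11:
  fixes n :: nat
  assumes "n > 1"
  defines "m \<equiv> \<Prod>(prime_factors n)"
  shows "real n * (\<Sum>d1 | d1 dvd n. \<Sum>d2 | d2 dvd n.
            real_of_int (mobius_mu d1 * mobius_mu d2) * dedekind_sum (n div d1) (n div d2))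
         = real (totient n) / 24 *
           (2 * (-1) ^ omega m * real (totient m) + 2 ^ omega n)"
proof -
  define S where "S = prime_factors n"
  define L where "L = (\<Sum>d1 | d1 dvd n. \<Sum>d2 | d2 dvd n.
            real_of_int (mobius_mu d1 * mobius_mu d2) * dedekind_sum (n div d1) (n div d2))"
  have primes: "finite S" "\<And>p. p \<in> S \<Longrightarrow> prime p" by (auto simp: S_def)
  have "omega m = card S" "omega n = card S"
    by (simp_all add: omega_def S_def m_def prime_factors_prod_primes primes[unfolded S_def])
  moreover have "real (totient m) = (\<Prod>p\<in>S. real p - 1)"
    unfolding m_def S_def[symmetric] by (rule totient_prod_primes[OF primes])
  moreover have "real (totient n) = real n * (\<Prod>p\<in>S. 1 - 1 / real p)"
    unfolding S_def by (rule totient_formula2)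
  moreover have "2 * L = (\<Prod>p\<in>S. 1 - 1 / real p)
      * (2 * (-1) ^ card S * (\<Prod>p\<in>S. real p - 1) + 2 ^ card S) / 12"
    unfolding L_def S_def by (rule sum_divisors_mobius_dedekind_sum[OF assms(1)])
  ultimately show ?thesis
    unfolding L_def[symmetric] by simp
qed

end
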